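(* Let $r\in\mathbb{C}$ and let $m,n$ be positive integers. Then $$\sum_{k=0}^n(-1)^k\binom{r-1}{k}\sum_{j=m}^{k+1}\binom{k}{j-1}\frac{s(j,m)}{j!}=(-1)^n\binom{r-1}{n}\frac{1}{m!}H_{n+1}(m)-\frac{1}{m!}\sum_{k=0}^n(-1)^k\binom{r}{k}H_k(m).$$ In particular, $\sum_{k=0}^n\frac{(-1)^k}{k+1}\binom{r-1}{k}=(-1)^n\binom{r-1}{n}H_{n+1}-\sum_{k=0}^n(-1)^k\binom{r}{k}H_k$.
   Context: For integers $m\ge 1$, $n\ge 0$, the multiple harmonic-like numbers are $H_n(m)=\sum_{1\le k_1+k_2+\cdots+k_m\le n}\frac{1}{k_1k_2\cdots k_m}$ (sum over positive integers $k_1,\dots,k_m$), with $H_n(0)=1$ for $n\ge 0$ and $H_0(m)=0$ for $m\ge1$. $H_n=H_n(1)=\sum_{k=1}^n\frac1k$. The (signed) Stirling numbers of the first kind $s(n,k)$ are defined by $\sum_{n\ge k}s(n,k)\frac{z^n}{n!}=\frac{\ln^k(1+z)}{k!}$, with $s(n,k)=0$ for $n<k$. For complex $x$, $\binom{x}{k}=\frac{x(x-1)\cdots(x-k+1)}{k!}$. *)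

theory Defs
  imports Complex_Main "HOL-Combinatorics.Stirling"
begin

definition stirling1s :: "nat \<Rightarrow> nat \<Rightarrow> int" where
  "stirling1s n k = (-1) ^ (n - k) * int (stirling n k)"

text \<open>For m = 0 the only tuple is the empty one, giving 1; for n = 0, m \<ge> 1 the sum is empty.\<close>
definition multiH :: "nat \<Rightarrow> nat \<Rightarrow> 'a::field" where
  "multiH n m = (\<Sum>ks \<in> {ks. length ks = m \<and> (\<forall>k\<in>set ks. 0 < k) \<and> sum_list ks \<le> n}.
                   1 / of_nat (prod_list ks))"

end

theory Submission
  imports Defs "HOL-Computational_Algebra.Formal_Power_Series"
begin

text \<open>
  The sum \<open>u\<^sub>N(m) = H\<^sub>N(m) - H\<^sub>N\<^sub>-\<^sub>1(m)\<close> runs over the compositions of \<open>N\<close> into \<open>m\<close> positive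
  parts. Writing \<open>N/(k\<^sub>1\<cdots>k\<^sub>m\<^sub>+\<^sub>1) = \<Sum>\<^sub>i 1/\<Prod>\<^sub>j\<^sub>\<noteq>\<^sub>i k\<^sub>j\<close> and deleting the \<open>i\<close>-th part gives
  \<open>N u\<^sub>N(m+1) = (m+1) H\<^sub>N\<^sub>-\<^sub>1(m)\<close>, which is the recurrence of the unsigned Stirling numbers;
  hence \<open>u\<^sub>N(m) = m! |s(N,m)| / N!\<close>.
  On the other hand, Vandermonde's identity expands \<open>x\<^sup>(\<^sup>k\<^sup>+\<^sup>1\<^sup>)/(k+1)! = (x+k choose k+1)\<close> as
  \<open>\<Sum>\<^sub>j (k choose j-1) (x choose j)\<close>, and comparing coefficients of \<open>x\<^sup>m\<close> shows that the inner
  sum of the theorem is \<open>|s(k+1,m)|/(k+1)!\<close>, i.e. \<open>(H\<^sub>k\<^sub>+\<^sub>1(m) - H\<^sub>k(m))/m!\<close>.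
  The theorem then follows by Abel summation with Pascal's rule.
\<close>

lemma stirling_Suc_Suc_div_fact:
  "of_nat (stirling (Suc n) (Suc m)) / fact n
     = (\<Sum>i\<le>n. of_nat (stirling i m) / (fact i :: 'a::field_char_0))"
proof (induction n)
  case 0
  then show ?case by simp
next
  case (Suc n)
  have "of_nat (stirling (Suc (Suc n)) (Suc m)) / (fact (Suc n) :: 'a)
      = of_nat (Suc n) * of_nat (stirling (Suc n) (Suc m)) / (of_nat (Suc n) * fact n)
        + of_nat (stirling (Suc n) m) / fact (Suc n)"
    by (simp only: stirling.simps(4) of_nat_add of_nat_mult add_divide_distrib fact_Suc of_nat_fact)
  also have "\<dots> = of_nat (stirling (Suc n) (Suc m)) / fact n + of_nat (stirling (Suc n) m) / fact (Suc n)"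
    by (simp del: of_nat_Suc)
  finally show ?case using Suc by simp
qed

lemma gbinomial_eq_sum_stirling1s:
  fixes x :: "'a::field_char_0"
  assumes "j \<le> K"
  shows "x gchoose j = (\<Sum>i\<le>K. of_int (stirling1s j i) * x ^ i) / fact j"
proof -
  have sign: "(-1) ^ j * (of_nat (stirling j i) * (-x) ^ i) = of_int (stirling1s j i) * x ^ i"
    if "i \<le> j" for i
  proof -
    have split: "(-1 :: 'a) ^ j = (-1) ^ (j - i) * (-1) ^ i"
      using that by (simp flip: power_add)
    have square: "(-1 :: 'a) ^ i * (-1) ^ i = 1"
      by (simp flip: power_add)
    have "(-1 :: 'a) ^ j * (-x) ^ i = (-1) ^ (j - i) * ((-1) ^ i * (-1) ^ i) * x ^ i"
      by (simp only: split power_minus[of x] mult_ac)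
    then have "(-1 :: 'a) ^ j * (-x) ^ i = (-1) ^ (j - i) * x ^ i"
      by (simp only: square mult_1_right)
    then show ?thesis
      by (simp add: stirling1s_def mult.left_commute)
  qed
  have "x gchoose j = (-1) ^ j * (\<Sum>i\<le>j. of_nat (stirling j i) * (-x) ^ i) / fact j"
    by (simp add: gbinomial_pochhammer stirling_pochhammer)
  also have "(-1) ^ j * (\<Sum>i\<le>j. of_nat (stirling j i) * (-x) ^ i) = (\<Sum>i\<le>j. of_int (stirling1s j i) * x ^ i)"
    by (simp add: sum_distrib_left sign)
  also have "\<dots> = (\<Sum>i\<le>K. of_int (stirling1s j i) * x ^ i)"
    by (rule sum.mono_neutral_left) (use assms in \<open>auto simp: stirling1s_def\<close>)
  finally show ?thesis .
qed

lemma pochhammer_div_fact_eq_sum_gbinomial: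
  fixes x :: "'a::field_char_0"
  shows "pochhammer x (Suc k) / fact (Suc k) = (\<Sum>j=1..Suc k. of_nat (k choose (j - 1)) * (x gchoose j))"
proof -
  have "pochhammer x (Suc k) / fact (Suc k) = (x + of_nat k) gchoose Suc k"
    using gbinomial_pochhammer'[of "x + of_nat k" "Suc k"] by simp
  also have "\<dots> = (\<Sum>j=0..Suc k. (x gchoose j) * (of_nat k gchoose (Suc k - j)))"
    by (rule gbinomial_Vandermonde[symmetric])
  also have "\<dots> = (\<Sum>j=1..Suc k. (x gchoose j) * (of_nat k gchoose (Suc k - j)))"
    by (rule sum.mono_neutral_right) (auto simp flip: binomial_gbinomial)
  also have "\<dots> = (\<Sum>j=1..Suc k. of_nat (k choose (j - 1)) * (x gchoose j))"
  proof (rule sum.cong[OF refl])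
    fix j assume "j \<in> {1..Suc k}"
    then have "j - 1 \<le> k" and "Suc k - j = k - (j - 1)"
      by auto
    then have "k choose (Suc k - j) = k choose (j - 1)"
      by (metis binomial_symmetric)
    then show "(x gchoose j) * (of_nat k gchoose (Suc k - j)) = of_nat (k choose (j - 1)) * (x gchoose j)"
      by (simp flip: binomial_gbinomial)
  qed
  finally show ?thesis .
qed

lemma stirling_div_fact_eq_sum_stirling1s:
  assumes "i \<le> Suc k"
  shows "of_nat (stirling (Suc k) i) / (fact (Suc k) :: 'a::real_normed_field)
       = (\<Sum>j=1..Suc k. of_nat (k choose (j - 1)) * of_int (stirling1s j i) / fact j)"
proof -
  define c :: "nat \<Rightarrow> 'a" where "c i = of_nat (stirling (Suc k) i) / fact (Suc k)" for i
  define d :: "nat \<Rightarrow> 'a"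
    where "d i = (\<Sum>j=1..Suc k. of_nat (k choose (j - 1)) * of_int (stirling1s j i) / fact j)" for i
  have "(\<Sum>i\<le>Suc k. c i * x ^ i) = (\<Sum>i\<le>Suc k. d i * x ^ i)" for x
  proof -
    have "(\<Sum>i\<le>Suc k. c i * x ^ i) = pochhammer x (Suc k) / fact (Suc k)"
      by (simp only: c_def stirling_pochhammer[symmetric] sum_divide_distrib times_divide_eq_left)
    also have "\<dots> = (\<Sum>j=1..Suc k. of_nat (k choose (j - 1)) * (x gchoose j))"
      by (rule pochhammer_div_fact_eq_sum_gbinomial)
    also have "\<dots> = (\<Sum>j=1..Suc k. \<Sum>i\<le>Suc k.
                       of_nat (k choose (j - 1)) * of_int (stirling1s j i) / fact j * x ^ i)"
      by (intro sum.cong refl)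
         (simp add: gbinomial_eq_sum_stirling1s[where K = "Suc k"] sum_distrib_left sum_divide_distrib mult.assoc
           del: sum.atMost_Suc)
    also have "\<dots> = (\<Sum>i\<le>Suc k. d i * x ^ i)"
      by (subst sum.swap) (simp only: d_def sum_distrib_right)
    finally show ?thesis .
  qed
  then have "\<forall>i\<le>Suc k. c i = d i"
    using polyfun_eq_coeffs by blast
  then show ?thesis
    using assms by (simp add: c_def d_def)
qed

definition compositions :: "nat \<Rightarrow> nat \<Rightarrow> nat list set" where
  "compositions n m = {ks. length ks = m \<and> (\<forall>k\<in>set ks. 0 < k) \<and> sum_list ks = n}"

definition compositions_le :: "nat \<Rightarrow> nat \<Rightarrow> nat list set" where
  "compositions_le n m = {ks. length ks = m \<and> (\<forall>k\<in>set ks. 0 < k) \<and> sum_list ks \<le> n}"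

definition composition_sum :: "nat \<Rightarrow> nat \<Rightarrow> 'a::field" where
  "composition_sum n m = (\<Sum>ks\<in>compositions n m. 1 / of_nat (prod_list ks))"

lemma multiH_eq_sum_compositions_le:
  "multiH n m = (\<Sum>ks\<in>compositions_le n m. 1 / of_nat (prod_list ks))"
  by (simp add: multiH_def compositions_le_def)

lemma finite_compositions_le: "finite (compositions_le n m)"
proof (rule finite_subset)
  show "compositions_le n m \<subseteq> {ks. set ks \<subseteq> {..n} \<and> length ks = m}"
    using member_le_sum_list by (fastforce simp: compositions_le_def)
  show "finite {ks. set ks \<subseteq> {..n} \<and> length ks = m}"
    by (rule finite_lists_length_eq) simp
qed

lemma finite_compositions: "finite (compositions n m)"
  by (rule finite_subset[OF _ finite_compositions_le[of n m]])
    (auto simp: compositions_def compositions_le_def)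

lemma multiH_eq_sum_composition_sum: "(multiH n m :: 'a::field) = (\<Sum>N\<le>n. composition_sum N m)"
proof -
  have "compositions_le n m = (\<Union>N\<le>n. compositions N m)"
    by (auto simp: compositions_def compositions_le_def)
  moreover have "(\<Sum>ks\<in>(\<Union>N\<le>n. compositions N m). 1 / of_nat (prod_list ks))
      = (\<Sum>N\<le>n. \<Sum>ks\<in>compositions N m. 1 / (of_nat (prod_list ks) :: 'a))"
    using finite_compositions by (intro sum.UNION_disjoint) (auto simp: compositions_def)
  ultimately show ?thesis
    by (simp only: multiH_eq_sum_compositions_le composition_sum_def)
qed

lemma multiH_Suc_diff: "multiH (Suc n) m - multiH n m = composition_sum (Suc n) m"
  by (simp add: multiH_eq_sum_composition_sum)

lemma composition_sum_0_right: "composition_sum n 0 = (if n = 0 then 1 else 0)"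
proof -
  have "compositions n 0 = (if n = 0 then {[]} else {})"
    by (auto simp: compositions_def)
  then show ?thesis
    by (simp add: composition_sum_def)
qed

lemma composition_sum_0_Suc: "composition_sum 0 (Suc m) = 0"
proof -
  have "compositions 0 (Suc m) = {}"
    by (auto simp: compositions_def length_Suc_conv)
  then show ?thesis
    by (simp add: composition_sum_def)
qed

definition remove_nth :: "nat \<Rightarrow> 'a list \<Rightarrow> 'a list" where
  "remove_nth i xs = take i xs @ drop (Suc i) xs"

definition insert_nth :: "nat \<Rightarrow> 'a \<Rightarrow> 'a list \<Rightarrow> 'a list" where
  "insert_nth i x xs = take i xs @ x # drop i xs"

lemma length_remove_nth: "i < length xs \<Longrightarrow> length (remove_nth i xs) = length xs - 1"
  by (simp add: remove_nth_def)

lemma set_remove_nth_subset: "set (remove_nth i xs) \<subseteq> set xs"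
  using set_take_subset set_drop_subset by (fastforce simp: remove_nth_def)

lemma sum_list_remove_nth:
  "i < length xs \<Longrightarrow> sum_list xs = xs ! i + sum_list (remove_nth i xs)"
  for xs :: "'a::comm_monoid_add list"
  by (subst id_take_nth_drop) (simp_all add: remove_nth_def ac_simps)

lemma prod_list_remove_nth:
  "i < length xs \<Longrightarrow> prod_list xs = xs ! i * prod_list (remove_nth i xs)"
  for xs :: "'a::comm_monoid_mult list"
  by (subst id_take_nth_drop) (simp_all add: remove_nth_def ac_simps)

lemma insert_nth_remove_nth: "i < length xs \<Longrightarrow> insert_nth i (xs ! i) (remove_nth i xs) = xs"
  by (simp add: insert_nth_def remove_nth_def id_take_nth_drop[symmetric])

lemma remove_nth_insert_nth: "i \<le> length xs \<Longrightarrow> remove_nth i (insert_nth i x xs) = xs"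
  by (simp add: insert_nth_def remove_nth_def)

lemma length_insert_nth: "i \<le> length xs \<Longrightarrow> length (insert_nth i x xs) = Suc (length xs)"
  by (simp add: insert_nth_def)

lemma set_insert_nth: "set (insert_nth i x xs) = insert x (set xs)"
  by (metis insert_nth_def append_take_drop_id set_append Un_insert_right list.set(2))

lemma sum_list_insert_nth: "sum_list (insert_nth i x xs) = x + sum_list xs"
  for xs :: "'a::comm_monoid_add list"
  by (metis insert_nth_def append_take_drop_id sum_list_append sum_list.Cons add.left_commute)

lemma bij_betw_remove_nth_compositions:
  assumes "i \<le> m"
  shows "bij_betw (remove_nth i) (compositions (Suc n) (Suc m)) (compositions_le n m)"
proof (rule bij_betw_byWitness[where f' = "\<lambda>l. insert_nth i (Suc n - sum_list l) l"])
  show "\<forall>ks\<in>compositions (Suc n) (Suc m). insert_nth i (Suc n - sum_list (remove_nth i ks)) (remove_nth i ks) = ks"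
  proof
    fix ks assume ks: "ks \<in> compositions (Suc n) (Suc m)"
    with assms have "i < length ks"
      by (simp add: compositions_def)
    with ks have "ks ! i + sum_list (remove_nth i ks) = Suc n"
      by (simp add: compositions_def flip: sum_list_remove_nth)
    then have "Suc n - sum_list (remove_nth i ks) = ks ! i"
      by linarith
    with \<open>i < length ks\<close> show "insert_nth i (Suc n - sum_list (remove_nth i ks)) (remove_nth i ks) = ks"
      by (simp add: insert_nth_remove_nth)
  qed
  show "\<forall>l\<in>compositions_le n m. remove_nth i (insert_nth i (Suc n - sum_list l) l) = l"
    using assms by (auto simp: compositions_le_def remove_nth_insert_nth)
  show "remove_nth i ` compositions (Suc n) (Suc m) \<subseteq> compositions_le n m"
  proof
    fix l assume "l \<in> remove_nth i ` compositions (Suc n) (Suc m)"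
    then obtain ks where ks: "ks \<in> compositions (Suc n) (Suc m)" and l: "l = remove_nth i ks"
      by blast
    with assms have len: "length ks = Suc m" and pos: "\<forall>k\<in>set ks. 0 < k"
      and sum: "sum_list ks = Suc n" and i: "i < length ks"
      by (auto simp: compositions_def)
    then have "0 < ks ! i"
      using nth_mem by blast
    with sum have "sum_list (remove_nth i ks) \<le> n"
      using sum_list_remove_nth[OF i] by linarith
    with len pos i show "l \<in> compositions_le n m"
      using set_remove_nth_subset[of i ks] by (auto simp: l compositions_le_def length_remove_nth)
  qed
  show "(\<lambda>l. insert_nth i (Suc n - sum_list l) l) ` compositions_le n m \<subseteq> compositions (Suc n) (Suc m)"
    using assms by (auto simp: compositions_def compositions_le_def length_insert_nth
        set_insert_nth sum_list_insert_nth)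
qed

lemma sum_list_div_prod_list_eq_sum_remove_nth:
  assumes "\<forall>k\<in>set ks. 0 < k"
  shows "of_nat (sum_list ks) / of_nat (prod_list ks)
       = (\<Sum>i<length ks. 1 / (of_nat (prod_list (remove_nth i ks)) :: 'a::field_char_0))"
proof -
  have "of_nat (sum_list ks) / (of_nat (prod_list ks) :: 'a)
      = (\<Sum>i<length ks. of_nat (ks ! i) / of_nat (prod_list ks))"
    by (simp add: sum_list_sum_nth atLeast0LessThan sum_divide_distrib)
  also have "\<dots> = (\<Sum>i<length ks. 1 / of_nat (prod_list (remove_nth i ks)))"
  proof (intro sum.cong refl)
    fix i assume "i \<in> {..<length ks}"
    then have "i < length ks" by simp
    with assms have "(of_nat (ks ! i) :: 'a) \<noteq> 0"
      by auto
    with \<open>i < length ks\<close> show "of_nat (ks ! i) / of_nat (prod_list ks) = 1 / (of_nat (prod_list (remove_nth i ks)) :: 'a)"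
      by (simp add: prod_list_remove_nth)
  qed
  finally show ?thesis .
qed

lemma composition_sum_Suc_Suc:
  "of_nat (Suc n) * composition_sum (Suc n) (Suc m) = of_nat (Suc m) * (multiH n m :: 'a::field_char_0)"
proof -
  let ?A = "compositions (Suc n) (Suc m)"
  have "of_nat (Suc n) * composition_sum (Suc n) (Suc m)
      = (\<Sum>ks\<in>?A. of_nat (sum_list ks) / (of_nat (prod_list ks) :: 'a))"
    by (simp add: composition_sum_def sum_distrib_left compositions_def)
  also have "\<dots> = (\<Sum>ks\<in>?A. \<Sum>i<Suc m. 1 / (of_nat (prod_list (remove_nth i ks)) :: 'a))"
  proof (intro sum.cong refl)
    fix ks assume "ks \<in> ?A"
    then show "of_nat (sum_list ks) / (of_nat (prod_list ks) :: 'a)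
             = (\<Sum>i<Suc m. 1 / of_nat (prod_list (remove_nth i ks)))"
      using sum_list_div_prod_list_eq_sum_remove_nth[of ks] by (simp add: compositions_def)
  qed
  also have "\<dots> = (\<Sum>i<Suc m. \<Sum>ks\<in>?A. 1 / of_nat (prod_list (remove_nth i ks)))"
    by (rule sum.swap)
  also have "\<dots> = (\<Sum>i<Suc m. multiH n m)"
  proof (intro sum.cong refl)
    fix i assume "i \<in> {..<Suc m}"
    then have "i \<le> m" by simp
    from sum.reindex_bij_betw[OF bij_betw_remove_nth_compositions[OF this]]
    show "(\<Sum>ks\<in>?A. 1 / of_nat (prod_list (remove_nth i ks))) = (multiH n m :: 'a)"
      by (simp add: multiH_eq_sum_compositions_le)
  qed
  finally show ?thesis
    by simp
qed

lemma composition_sum_eq_stirling: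
  "composition_sum n m = fact m * of_nat (stirling n m) / (fact n :: 'a::field_char_0)"
proof (induction m arbitrary: n)
  case 0
  then show ?case
    by (cases n) (simp_all add: composition_sum_0_right)
next
  case (Suc m)
  show ?case
  proof (cases n)
    case 0
    then show ?thesis
      by (simp add: composition_sum_0_Suc)
  next
    case (Suc n')
    have "of_nat (Suc n') * composition_sum (Suc n') (Suc m) = of_nat (Suc m) * (\<Sum>i\<le>n'. composition_sum i m :: 'a)"
      by (simp only: composition_sum_Suc_Suc multiH_eq_sum_composition_sum)
    also have "\<dots> = fact (Suc m) * (\<Sum>i\<le>n'. of_nat (stirling i m) / fact i)"
      by (simp add: Suc.IH sum_distrib_left mult.assoc)
    also have "\<dots> = fact (Suc m) * of_nat (stirling (Suc n') (Suc m)) / fact n'"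
      by (simp only: stirling_Suc_Suc_div_fact[symmetric] times_divide_eq_right)
    finally show ?thesis
      unfolding Suc by (simp add: field_simps del: of_nat_Suc)
  qed
qed

lemma multiH_Suc_one_diff: "multiH (Suc n) 1 - multiH n 1 = 1 / (of_nat (Suc n) :: 'a::field_char_0)"
proof -
  have "multiH (Suc n) 1 - multiH n 1 = fact 1 * of_nat (stirling (Suc n) (Suc 0)) / (fact (Suc n) :: 'a)"
    by (simp only: multiH_Suc_diff composition_sum_eq_stirling One_nat_def)
  also have "\<dots> = fact n / (of_nat (Suc n) * fact n)"
    by (simp only: stirling_Suc_n_1 of_nat_fact fact_Suc fact_1 mult_1_left)
  finally show ?thesis
    by (simp del: of_nat_Suc)
qed

lemma sum_binomial_stirling1s_eq_multiH_diff:
  assumes "0 < m"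
  shows "(\<Sum>j=m..k+1. of_nat (k choose (j - 1)) * of_int (stirling1s j m) / fact j)
       = (multiH (k+1) m - multiH k m) / (fact m :: 'a::real_normed_field)"
proof -
  have "(multiH (k+1) m - multiH k m) / (fact m :: 'a) = of_nat (stirling (Suc k) m) / fact (Suc k)"
    by (simp add: multiH_Suc_diff composition_sum_eq_stirling del: of_nat_Suc fact_Suc)
  moreover have "(\<Sum>j=m..k+1. of_nat (k choose (j - 1)) * of_int (stirling1s j m) / fact j)
      = of_nat (stirling (Suc k) m) / (fact (Suc k) :: 'a)"
  proof (cases "m \<le> Suc k")
    case True
    have "(\<Sum>j=m..k+1. of_nat (k choose (j - 1)) * of_int (stirling1s j m) / fact j)
        = (\<Sum>j=1..Suc k. of_nat (k choose (j - 1)) * of_int (stirling1s j m) / (fact j :: 'a))"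
      by (rule sum.mono_neutral_left) (use assms in \<open>auto simp: stirling1s_def\<close>)
    also have "\<dots> = of_nat (stirling (Suc k) m) / fact (Suc k)"
      by (rule stirling_div_fact_eq_sum_stirling1s[OF True, symmetric])
    finally show ?thesis .
  qed simp
  ultimately show ?thesis
    by simp
qed

lemma gbinomial_abel_summation:
  fixes r :: "'a::field_char_0" and h :: "nat \<Rightarrow> 'a"
  shows "(\<Sum>k=0..n. (-1)^k * ((r - 1) gchoose k) * (h (k+1) - h k))
       = (-1)^n * ((r - 1) gchoose n) * h (n+1) - (\<Sum>k=0..n. (-1)^k * (r gchoose k) * h k)"
proof (induction n)
  case 0
  then show ?case by simp
next
  case (Suc n)
  have "r gchoose Suc n = ((r - 1) gchoose n) + ((r - 1) gchoose Suc n)"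
    using gbinomial_Suc_Suc[of "r - 1" n] by simp
  with Suc show ?case
    by (simp add: algebra_simps)
qed

lemma alternating_gbinomial_stirling1s_sum:
  fixes r :: "'a::real_normed_field"
  assumes "0 < m"
  shows "(\<Sum>k=0..n. (-1)^k * ((r - 1) gchoose k) *
            (\<Sum>j=m..k+1. of_nat (k choose (j - 1)) * of_int (stirling1s j m) / fact j))
         = (-1)^n * ((r - 1) gchoose n) * (1 / fact m) * multiH (n + 1) m
           - (1 / fact m) * (\<Sum>k=0..n. (-1)^k * (r gchoose k) * multiH k m)"
proof -
  have "(\<Sum>k=0..n. (-1)^k * ((r - 1) gchoose k) *
            (\<Sum>j=m..k+1. of_nat (k choose (j - 1)) * of_int (stirling1s j m) / fact j))
      = (1 / fact m) * (\<Sum>k=0..n. (-1)^k * ((r - 1) gchoose k) * (multiH (k+1) m - multiH k m))"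
    unfolding sum_binomial_stirling1s_eq_multiH_diff[OF assms] sum_distrib_left
    by (intro sum.cong refl) (simp add: mult_ac)
  also have "\<dots> = (1 / fact m) * ((-1)^n * ((r - 1) gchoose n) * multiH (n + 1) m
                     - (\<Sum>k=0..n. (-1)^k * (r gchoose k) * multiH k m))"
    by (simp only: gbinomial_abel_summation[of r "\<lambda>k. multiH k m"])
  finally show ?thesis
    by (simp only: right_diff_distrib mult_ac)
qed

lemma alternating_gbinomial_harmonic_sum:
  fixes r :: "'a::field_char_0"
  shows "(\<Sum>k=0..n. (-1)^k / of_nat (k + 1) * ((r - 1) gchoose k))
       = (-1)^n * ((r - 1) gchoose n) * multiH (n + 1) 1 - (\<Sum>k=0..n. (-1)^k * (r gchoose k) * multiH k 1)"
proof -
  have "(\<Sum>k=0..n. (-1)^k / of_nat (k + 1) * ((r - 1) gchoose k))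
      = (\<Sum>k=0..n. (-1)^k * ((r - 1) gchoose k) * (multiH (k+1) 1 - multiH k 1))"
    using multiH_Suc_one_diff[where 'a = 'a] by (intro sum.cong refl) (simp del: of_nat_Suc)
  then show ?thesis
    by (simp only: gbinomial_abel_summation[of r "\<lambda>k. multiH k 1"])
qed

theorem theorem9:
  fixes r :: complex and m n :: nat
  assumes "0 < m" and "0 < n"
  shows "((\<Sum>k=0..n. (-1)^k * ((r - 1) gchoose k) *
            (\<Sum>j=m..k+1. of_nat (k choose (j - 1)) * of_int (stirling1s j m) / fact j))
         = (-1)^n * ((r - 1) gchoose n) * (1 / fact m) * multiH (n + 1) m
           - (1 / fact m) * (\<Sum>k=0..n. (-1)^k * (r gchoose k) * multiH k m))
       \<and> ((\<Sum>k=0..n. (-1)^k / of_nat (k + 1) * ((r - 1) gchoose k))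
         = (-1)^n * ((r - 1) gchoose n) * multiH (n + 1) 1
           - (\<Sum>k=0..n. (-1)^k * (r gchoose k) * multiH k 1))"
  using alternating_gbinomial_stirling1s_sum[OF assms(1)] alternating_gbinomial_harmonic_sum
  by blast

end
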